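(* Let $k\ge 3$ and let $c$ be a proper coloring of $\mathcal H_k$. Then for any $i_1,i_2\in[k]$ with $i_1\equiv i_2\pmod 2$, we have $c(v_{i_1,j})=c(v_{i_2,j})$ for all $j\in[3]$.
   Context: A bi-hypergraph $\mathcal H=(V,E)$ consists of a finite vertex set $V$ and a set $E$ of subsets of $V$, called edges, with no edge contained in another. A mapping $f:V\to\mathbb N$ is a proper coloring of $\mathcal H$ if $1<|f(e)|<|e|$ for every $e\in E$, where $f(e)=\{f(v):v\in e\}$. For $k\ge 2$, $\mathcal H_k$ is the $3$-uniform bi-hypergraph with vertex set $\{v_{i,j}: i\in[k], j\in[3]\}$ (all distinct), where we use the convention $v_{i,4}=v_{i,1}$, $v_{i,5}=v_{i,2}$, and whose edges are: the sets $V_i=\{v_{i,1},v_{i,2},v_{i,3}\}$ for all $i\in[k]$, and the sets $\{v_{q+1,j},v_{q,j},v_{q,j+t}\}$ for all $q\in[k-1]$, $j\in[3]$, $t\in\{1,2\}$. *)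

theory Defs
  imports Main
begin

text \<open>A vertex v_{i,j} of H_k is encoded as the pair (i,j), i in {1..k}, j in {1..3}.
  The cyclic convention v_{i,4} = v_{i,1}, v_{i,5} = v_{i,2} is realised by wrap3.\<close>

definition wrap3 :: "nat \<Rightarrow> nat" where
  "wrap3 n = ((n - 1) mod 3) + 1"

definition Hk_vertices :: "nat \<Rightarrow> (nat \<times> nat) set" where
  "Hk_vertices k = {1..k} \<times> {1..3}"

definition Hk_edges :: "nat \<Rightarrow> (nat \<times> nat) set set" where
  "Hk_edges k =
     {{(i,1),(i,2),(i,3)} | i. i \<in> {1..k}}
     \<union> {{(q+1,j),(q,j),(q, wrap3 (j+t))} | q j t.
          q \<in> {1..k-1} \<and> j \<in> {1..3} \<and> t \<in> {1,2}}"

definition proper_coloring :: "'v set set \<Rightarrow> ('v \<Rightarrow> nat) \<Rightarrow> bool" where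
  "proper_coloring E f \<longleftrightarrow> (\<forall>e\<in>E. 1 < card (f ` e) \<and> card (f ` e) < card e)"

end

theory Submission
  imports Defs
begin

text \<open>Every edge of \<open>\<H>\<^sub>k\<close> has three distinct vertices, so a proper coloring uses exactly two
  colors on it. On a row this leaves one color class of size one; the cross edges towards the
  next row then force each vertex of row \<open>q + 1\<close> to take the color of row \<open>q\<close> that its
  neighbour \<open>v\<^sub>q\<^sub>,\<^sub>j\<close> does not have, i.e. row \<open>q + 1\<close> is row \<open>q\<close> with its two colors
  exchanged. Exchanging twice gives back row \<open>q\<close>.\<close>

lemma card_triple_eq_2_iff:
  "card {x, y, z} = 2 \<longleftrightarrow> (x = y \<and> y \<noteq> z) \<or> (x = z \<and> x \<noteq> y) \<or> (y = z \<and> x \<noteq> y)"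
  by (cases "x = y"; cases "x = z"; cases "y = z"; simp add: card_insert_if)

lemma eq_if_neq_neq_in_card_2:
  assumes "card S = 2" "x \<in> S" "y \<in> S" "z \<in> S" "x \<noteq> y" "y \<noteq> z"
  shows "x = z"
  using assms by (auto simp: card_2_iff)

lemma proper_coloring_card_image_triple:
  assumes "proper_coloring E f" "{u, v, w} \<in> E" "u \<noteq> v" "u \<noteq> w" "v \<noteq> w"
  shows "card {f u, f v, f w} = 2"
proof -
  have "card {u, v, w} = 3" using assms(3-5) by simp
  moreover have "card (f ` {u, v, w}) \<le> 3" by (simp add: card_insert_le_m1)
  ultimately show ?thesis using assms(1,2) unfolding proper_coloring_def by fastforce
qed

text \<open>The hypothesis on \<open>b1, b2, b3\<close> is essential: if \<open>a1\<close> is the color used once in its row,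
  the cross triples alone allow \<open>b1 = a1\<close>, but they force \<open>b2 = b3 = a1\<close>.\<close>

lemma adjacent_row_swaps_colors:
  assumes "card {a1, a2, a3} = 2" "card {b1, b2, b3} = 2"
    and "card {b1, a1, a2} = 2" "card {b1, a1, a3} = 2"
    and "card {b2, a2, a1} = 2" "card {b2, a2, a3} = 2"
    and "card {b3, a3, a1} = 2" "card {b3, a3, a2} = 2"
  shows "{b1, b2, b3} = {a1, a2, a3} \<and> b1 \<noteq> a1 \<and> b2 \<noteq> a2 \<and> b3 \<noteq> a3"
  using assms unfolding card_triple_eq_2_iff by auto

lemma Hk_row_edge: "i \<in> {1..k} \<Longrightarrow> {(i, 1), (i, 2), (i, 3)} \<in> Hk_edges k"
  unfolding Hk_edges_def by blast

lemma Hk_cross_edge: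
  assumes "1 \<le> q" "q < k" "j \<in> {1..3}" "j' \<in> {1..3}" "j \<noteq> j'"
  shows "{(q + 1, j), (q, j), (q, j')} \<in> Hk_edges k"
proof -
  have "j \<in> {1, 2, 3}" "j' \<in> {1, 2, 3}" using assms(3,4) by auto
  then have "\<exists>t\<in>{1, 2}. wrap3 (j + t) = j'"
    using assms(5) by (auto simp: wrap3_def)
  then obtain t where t: "t \<in> {1, 2}" and wrap: "wrap3 (j + t) = j'" ..
  have "q \<in> {1..k - 1}" using assms(1,2) by auto
  then have "{(q + 1, j), (q, j), (q, wrap3 (j + t))} \<in> Hk_edges k"
    using assms(3) t unfolding Hk_edges_def by blast
  then show ?thesis unfolding wrap .
qed

context
  fixes k :: nat and c :: "nat \<times> nat \<Rightarrow> nat"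
  assumes proper: "proper_coloring (Hk_edges k) c"
begin

lemma row_two_colored: "i \<in> {1..k} \<Longrightarrow> card {c (i, 1), c (i, 2), c (i, 3)} = 2"
  using proper_coloring_card_image_triple[OF proper Hk_row_edge] by simp

lemma cross_two_colored:
  "\<lbrakk>1 \<le> q; q < k; j \<in> {1..3}; j' \<in> {1..3}; j \<noteq> j'\<rbrakk>
    \<Longrightarrow> card {c (q + 1, j), c (q, j), c (q, j')} = 2"
  using proper_coloring_card_image_triple[OF proper Hk_cross_edge] by simp

lemma next_row_swaps_colors:
  assumes "1 \<le> q" "q < k"
  shows "{c (q + 1, 1), c (q + 1, 2), c (q + 1, 3)} = {c (q, 1), c (q, 2), c (q, 3)}
    \<and> c (q + 1, 1) \<noteq> c (q, 1) \<and> c (q + 1, 2) \<noteq> c (q, 2) \<and> c (q + 1, 3) \<noteq> c (q, 3)"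
  using assms
  by (intro adjacent_row_swaps_colors row_two_colored cross_two_colored) auto

lemma row_colors_period_2:
  assumes "1 \<le> q" "q + 2 \<le> k" "j \<in> {1..3}"
  shows "c (q + 2, j) = c (q, j)"
proof -
  let ?row = "\<lambda>i. {c (i, 1), c (i, 2), c (i, 3)}"
  have j: "j = 1 \<or> j = 2 \<or> j = 3" using assms(3) by auto
  have in_row: "c (i, j) \<in> ?row i" for i using j by auto
  have swap: "?row (i + 1) = ?row i" "c (i + 1, j) \<noteq> c (i, j)" if "1 \<le> i" "i < k" for i
  proof -
    note swapped = next_row_swaps_colors[OF that]
    show "?row (i + 1) = ?row i" using swapped by (rule conjunct1)
    show "c (i + 1, j) \<noteq> c (i, j)" using conjunct2[OF swapped] j by (elim disjE) simp_all
  qed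
  have rows: "?row (q + 1) = ?row q" "?row (q + 2) = ?row q"
    using swap[of q] swap[of "q + 1"] assms(1,2) by (simp_all add: numeral_2_eq_2)
  have "card (?row q) = 2" using row_two_colored[of q] assms(1,2) by simp
  moreover have "c (q + 2, j) \<in> ?row q" "c (q + 1, j) \<in> ?row q" "c (q, j) \<in> ?row q"
    using in_row[of "q + 2"] in_row[of "q + 1"] in_row[of q] unfolding rows .
  moreover have "c (q + 2, j) \<noteq> c (q + 1, j)" "c (q + 1, j) \<noteq> c (q, j)"
    using swap(2)[of q] swap(2)[of "q + 1"] assms(1,2) by (simp_all add: numeral_2_eq_2)
  ultimately show ?thesis by (rule eq_if_neq_neq_in_card_2)
qed

lemma row_colors_periodic:
  "\<lbrakk>1 \<le> i; i + 2 * m \<le> k; j \<in> {1..3}\<rbrakk> \<Longrightarrow> c (i + 2 * m, j) = c (i, j)"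
proof (induction m)
  case (Suc m)
  then show ?case using row_colors_period_2[of "i + 2 * m" j] by simp
qed simp

end

theorem mainTheorem14:
  fixes k :: nat and c :: "nat \<times> nat \<Rightarrow> nat" and i1 i2 j :: nat
  assumes "k \<ge> 3"
    and "proper_coloring (Hk_edges k) c"
    and "i1 \<in> {1..k}" and "i2 \<in> {1..k}"
    and "i1 mod 2 = i2 mod 2"
    and "j \<in> {1..3}"
  shows "c (i1, j) = c (i2, j)"
proof -
  have periodic: "c (i + 2 * m, j) = c (i, j)" if "i \<in> {1..k}" "i + 2 * m \<in> {1..k}" for i m
    using row_colors_periodic[OF assms(2)] that assms(6) by simp
  obtain m where "i2 = i1 + 2 * m \<or> i1 = i2 + 2 * m"
    using assms(5) by (metis le_add_diff_inverse mod_eq_dvd_iff_nat dvdE nat_le_linear)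
  then show ?thesis using periodic assms(3,4) by metis
qed

end
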